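(* (i) Let $\psi:\mathbb{Q}_p^n\to\mathbb{C}$ be a negative definite function such that, for every $j\in\mathbb{N}=\{0,1,2,\dots\}$, the function $\xi\mapsto[\psi(\xi)]^j$ is also negative definite. Then $\xi\mapsto e^{\psi(\xi)}$ is negative definite. (ii) Let $c_j\ge 0$ and $\alpha_j\in\mathbb{N}$ ($j\ge1$) be such that the real series $\sum_{j=1}^\infty c_j y^{\alpha_j}$ converges for all $y\ge 0$ and defines a non-constant function, and set $\psi_0(\xi):=\sum_{j=1}^\infty c_j\|\xi\|_p^{\alpha_j}$ for $\xi\in\mathbb{Q}_p^n$. Then for every integer $k\ge1$ the $k$-fold iterated exponential $$\xi\mapsto \underbrace{\exp(\exp(\cdots\exp}_{k\text{ times}}(\psi_0(\xi))\cdots))$$ is a continuous negative definite function on $\mathbb{Q}_p^n$.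
   Context: $p$ is a prime, $\mathbb{Q}_p$ the field of $p$-adic numbers with absolute value $|\cdot|_p$, and for $x=(x_1,\dots,x_n)\in\mathbb{Q}_p^n$, $\|x\|_p:=\max_i|x_i|_p$. A function $\psi:\mathbb{Q}_p^n\to\mathbb{C}$ is negative definite if for all $m\ge1$, all $x_1,\dots,x_m\in\mathbb{Q}_p^n$ and all $\lambda_1,\dots,\lambda_m\in\mathbb{C}$, $\sum_{i=1}^m\sum_{j=1}^m\big(\psi(x_i)+\overline{\psi(x_j)}-\psi(x_i-x_j)\big)\lambda_i\overline{\lambda_j}\ge0.$ *)

theory Defs
  imports "HOL-Analysis.Analysis" "HOL-Computational_Algebra.Primes" "HOL-Library.Complex_Order"
begin

definition padic_abs_rat :: "nat \<Rightarrow> rat \<Rightarrow> real" where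
  "padic_abs_rat p q =
     (if q = 0 then 0
      else (let (a, b) = quotient_of q in
            real p powr (real (multiplicity (int p) b) - real (multiplicity (int p) a))))"

definition padic_cauchy :: "nat \<Rightarrow> (nat \<Rightarrow> rat) \<Rightarrow> bool" where
  "padic_cauchy p f \<longleftrightarrow>
     (\<forall>e>0. \<exists>N. \<forall>m\<ge>N. \<forall>k\<ge>N. padic_abs_rat p (f m - f k) < e)"

definition padic_equiv :: "nat \<Rightarrow> (nat \<Rightarrow> rat) \<Rightarrow> (nat \<Rightarrow> rat) \<Rightarrow> bool" where
  "padic_equiv p f g \<longleftrightarrow> (\<lambda>k. padic_abs_rat p (f k - g k)) \<longlonglongrightarrow> 0"

text \<open>An element of Q_p is an equivalence class of p-adic Cauchy sequences of rationals.\<close>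
type_synonym qp = "(nat \<Rightarrow> rat) set"

definition qp_class :: "nat \<Rightarrow> (nat \<Rightarrow> rat) \<Rightarrow> qp" where
  "qp_class p f = {g. padic_cauchy p g \<and> padic_equiv p f g}"

definition Qp :: "nat \<Rightarrow> qp set" where
  "Qp p = {qp_class p f | f. padic_cauchy p f}"

definition qp_rep :: "qp \<Rightarrow> (nat \<Rightarrow> rat)" where
  "qp_rep x = (SOME f. f \<in> x)"

definition qp_sub :: "nat \<Rightarrow> qp \<Rightarrow> qp \<Rightarrow> qp" where
  "qp_sub p x y = qp_class p (\<lambda>k. qp_rep x k - qp_rep y k)"

definition qp_abs :: "nat \<Rightarrow> qp \<Rightarrow> real" where
  "qp_abs p x = lim (\<lambda>k. padic_abs_rat p (qp_rep x k))"

definition Qpn :: "nat \<Rightarrow> ('n::finite \<Rightarrow> qp) set" where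
  "Qpn p = {x. \<forall>i. x i \<in> Qp p}"

definition qpn_sub :: "nat \<Rightarrow> ('n::finite \<Rightarrow> qp) \<Rightarrow> ('n \<Rightarrow> qp) \<Rightarrow> ('n \<Rightarrow> qp)" where
  "qpn_sub p x y = (\<lambda>i. qp_sub p (x i) (y i))"

definition qpn_norm :: "nat \<Rightarrow> ('n::finite \<Rightarrow> qp) \<Rightarrow> real" where
  "qpn_norm p x = Max (range (\<lambda>i. qp_abs p (x i)))"

definition negdef :: "nat \<Rightarrow> (('n::finite \<Rightarrow> qp) \<Rightarrow> complex) \<Rightarrow> bool" where
  "negdef p \<psi> \<longleftrightarrow>
     (\<forall>m::nat. m \<ge> 1 \<longrightarrow> (\<forall>(x::nat \<Rightarrow> ('n \<Rightarrow> qp)) (l::nat \<Rightarrow> complex).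
        (\<forall>i<m. x i \<in> Qpn p) \<longrightarrow>
        0 \<le> (\<Sum>i<m. \<Sum>j<m.
               (\<psi> (x i) + cnj (\<psi> (x j)) - \<psi> (qpn_sub p (x i) (x j))) * l i * cnj (l j))))"

definition qpn_continuous :: "nat \<Rightarrow> (('n::finite \<Rightarrow> qp) \<Rightarrow> complex) \<Rightarrow> bool" where
  "qpn_continuous p F \<longleftrightarrow>
     (\<forall>x\<in>Qpn p. \<forall>e>0. \<exists>d>0. \<forall>y\<in>Qpn p.
        qpn_norm p (qpn_sub p y x) < d \<longrightarrow> cmod (F y - F x) < e)"

end

theory Submission
  imports Defs "HOL-Computational_Algebra.Squarefree"
begin

(*
  (i) The quadratic form of exp \<circ> \<psi> is the sum of the exponential series of the quadratic
  forms of the powers \<psi>^j, all of which are nonnegative.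

  (ii) The iterated exponential is h(\<parallel>\<xi>\<parallel>_p) for a continuous nondecreasing h on [0, \<infinity>)
  with h(0) \<ge> 0, so everything rests on the ultrametric inequality for \<parallel>_\<parallel>_p. For finitely
  many points x_i and r \<ge> 0, the relation \<parallel>x_i - x_j\<parallel>_p \<le> r is an equivalence, and the form of
  the threshold function [\<parallel>_\<parallel>_p > r] splits into a square plus the kernel of that equivalence,
  restricted to the points with \<parallel>x_i\<parallel>_p > r; hence it is nonnegative. On the finitely many
  values that occur, a nondecreasing h is a nonnegative combination of a constant and such
  thresholds.
*)

section \<open>The p-adic absolute value\<close>

lemma padic_abs_rat_nonneg: "padic_abs_rat p q \<ge> 0"
  by (auto simp: padic_abs_rat_def split: prod.splits)

lemma padic_abs_rat_zero [simp]: "padic_abs_rat p 0 = 0"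
  by (simp add: padic_abs_rat_def)

lemma rat_fraction_nonzero:
  fixes q :: rat
  assumes "q \<noteq> 0"
  obtains a b where "a \<noteq> 0" "b \<noteq> 0" "q = of_int a / of_int b"
proof -
  obtain a b where ab: "quotient_of q = (a, b)" by (cases "quotient_of q")
  then have "q = of_int a / of_int b" "b > 0" by (simp_all add: quotient_of_div quotient_of_denom_pos)
  with assms show ?thesis by (intro that[of a b]) auto
qed

lemma padic_abs_rat_fraction:
  assumes "prime p" "a \<noteq> 0" "b \<noteq> 0" "q = of_int a / of_int b"
  shows "padic_abs_rat p q = real p powr (real (multiplicity (int p) b) - real (multiplicity (int p) a))"
proof -
  obtain a0 b0 where qo: "quotient_of q = (a0, b0)" by (cases "quotient_of q")
  have qe: "q = of_int a0 / of_int b0" and b0: "b0 > 0"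
    using qo quotient_of_div quotient_of_denom_pos by blast+
  have q0: "q \<noteq> 0" using assms by simp
  with qe have a0: "a0 \<noteq> 0" by auto
  have "of_int (a * b0) = (of_int (a0 * b) :: rat)"
    using qe assms b0 by (simp add: field_simps)
  then have "multiplicity (int p) (a * b0) = multiplicity (int p) (a0 * b)"
    by (simp only: of_int_eq_iff)
  moreover have "prime_elem (int p)" using assms(1) by simp
  ultimately have "multiplicity (int p) a + multiplicity (int p) b0
      = multiplicity (int p) a0 + multiplicity (int p) b"
    using assms b0 a0 by (simp add: prime_elem_multiplicity_mult_distrib)
  then have "real (multiplicity (int p) b) - real (multiplicity (int p) a)
      = real (multiplicity (int p) b0) - real (multiplicity (int p) a0)"
    by linarith
  then show ?thesis using q0 qo by (simp add: padic_abs_rat_def)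
qed

lemma padic_abs_rat_uminus:
  assumes "prime p"
  shows "padic_abs_rat p (- q) = padic_abs_rat p q"
proof (cases "q = 0")
  case False
  then obtain a b where ab: "a \<noteq> 0" "b \<noteq> 0" "q = of_int a / of_int b"
    by (rule rat_fraction_nonzero)
  then have "- q = of_int (- a) / of_int b" by simp
  then show ?thesis
    using padic_abs_rat_fraction[OF assms ab] padic_abs_rat_fraction[OF assms, of "- a" b "- q"] ab
    by simp
qed simp

lemma padic_abs_rat_add_le_max:
  assumes "prime p"
  shows "padic_abs_rat p (q1 + q2) \<le> max (padic_abs_rat p q1) (padic_abs_rat p q2)"
proof (cases "q1 = 0 \<or> q2 = 0 \<or> q1 + q2 = 0")
  case True
  then show ?thesis
    using padic_abs_rat_nonneg[of p q1] padic_abs_rat_nonneg[of p q2] by (auto simp: le_max_iff_disj)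
next
  case False
  then obtain a b c d where ab: "a \<noteq> 0" "b \<noteq> 0" "q1 = of_int a / of_int b"
    and cd: "c \<noteq> 0" "d \<noteq> 0" "q2 = of_int c / of_int d"
    by (meson rat_fraction_nonzero)
  have sum_eq: "q1 + q2 = of_int (a * d + c * b) / of_int (b * d)"
    using ab cd by (simp add: field_simps)
  have sum_nz: "a * d + c * b \<noteq> 0"
  proof
    assume "a * d + c * b = 0"
    then have "of_int (a * d + c * b) = (0 :: rat)" by simp
    with False sum_eq show False by simp
  qed
  have pe: "prime_elem (int p)" using assms by simp
  define m where "m = multiplicity (int p)"
  define k where "k = min (m a + m d) (m c + m b)"
  have "int p ^ k dvd a * d" "int p ^ k dvd c * b"
    by (rule multiplicity_dvd';
        use ab cd pe in \<open>simp add: m_def k_def prime_elem_multiplicity_mult_distrib\<close>)+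
  then have "int p ^ k dvd a * d + c * b" by simp
  then have k_le: "k \<le> m (a * d + c * b)"
    unfolding m_def using multiplicity_geI sum_nz pe by (metis not_prime_elem_zero prime_elem_def)
  have "m (b * d) = m b + m d"
    using ab cd pe by (simp add: m_def prime_elem_multiplicity_mult_distrib)
  with k_le have exponent_le: "real (m (b * d)) - real (m (a * d + c * b))
      \<le> max (real (m b) - real (m a)) (real (m d) - real (m c))"
    unfolding k_def by linarith
  have p_gt_1: "real p > 1" using assms prime_gt_1_nat by auto
  have "padic_abs_rat p (q1 + q2) = real p powr (real (m (b * d)) - real (m (a * d + c * b)))"
    using padic_abs_rat_fraction[OF assms sum_nz _ sum_eq] ab cd by (simp add: m_def)
  also have "\<dots> \<le> real p powr max (real (m b) - real (m a)) (real (m d) - real (m c))"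
    using exponent_le p_gt_1 by simp
  also have "\<dots> = max (padic_abs_rat p q1) (padic_abs_rat p q2)"
    using padic_abs_rat_fraction[OF assms ab] padic_abs_rat_fraction[OF assms cd] p_gt_1
    by (simp add: m_def max_def)
  finally show ?thesis .
qed

lemma abs_diff_le_of_le_max:
  fixes a b d :: real
  assumes "a \<le> max d b" "b \<le> max d a" "0 \<le> a" "0 \<le> b" "0 \<le> d"
  shows "\<bar>a - b\<bar> \<le> d"
  using assms by (simp add: max_def split: if_splits)

context
  fixes p :: nat
  assumes prime: "prime p"
begin

lemma padic_abs_rat_minus_commute: "padic_abs_rat p (a - b) = padic_abs_rat p (b - a)"
  using padic_abs_rat_uminus[OF prime, of "a - b"] by simp

lemma padic_abs_rat_diff_ultra:
  "padic_abs_rat p (a - c) \<le> max (padic_abs_rat p (a - b)) (padic_abs_rat p (b - c))"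
  using padic_abs_rat_add_le_max[OF prime, of "a - b" "b - c"] by simp

lemma padic_abs_rat_diff_le_max: "padic_abs_rat p (a - b) \<le> max (padic_abs_rat p a) (padic_abs_rat p b)"
  using padic_abs_rat_add_le_max[OF prime, of a "- b"] padic_abs_rat_uminus[OF prime, of b] by simp

lemma padic_abs_rat_le_max_diff: "padic_abs_rat p a \<le> max (padic_abs_rat p (a - b)) (padic_abs_rat p b)"
  using padic_abs_rat_add_le_max[OF prime, of "a - b" b] by simp

lemma abs_padic_abs_rat_diff_le: "\<bar>padic_abs_rat p a - padic_abs_rat p b\<bar> \<le> padic_abs_rat p (a - b)"
  using padic_abs_rat_le_max_diff[of a b] padic_abs_rat_le_max_diff[of b a]
  by (intro abs_diff_le_of_le_max) (simp_all add: padic_abs_rat_minus_commute[of b a] padic_abs_rat_nonneg)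

lemma padic_cauchy_diff:
  assumes "padic_cauchy p f" "padic_cauchy p g"
  shows "padic_cauchy p (\<lambda>k. f k - g k)"
  unfolding padic_cauchy_def
proof (intro allI impI)
  fix e :: real
  assume "e > 0"
  with assms obtain N1 N2 where
    N1: "\<forall>m\<ge>N1. \<forall>k\<ge>N1. padic_abs_rat p (f m - f k) < e" and
    N2: "\<forall>m\<ge>N2. \<forall>k\<ge>N2. padic_abs_rat p (g m - g k) < e"
    unfolding padic_cauchy_def by blast
  have "padic_abs_rat p (f m - g m - (f k - g k)) < e" if "m \<ge> max N1 N2" "k \<ge> max N1 N2" for m k
  proof -
    have "f m - g m - (f k - g k) = (f m - f k) - (g m - g k)" by simp
    moreover have "padic_abs_rat p (f m - f k) < e" "padic_abs_rat p (g m - g k) < e"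
      using N1 N2 that by auto
    ultimately show ?thesis
      using padic_abs_rat_diff_le_max[of "f m - f k" "g m - g k"]
      by (metis max_less_iff_conj order.strict_trans1)
  qed
  then show "\<exists>N. \<forall>m\<ge>N. \<forall>k\<ge>N. padic_abs_rat p (f m - g m - (f k - g k)) < e"
    by blast
qed

lemma padic_cauchy_abs_convergent:
  assumes "padic_cauchy p f"
  shows "convergent (\<lambda>k. padic_abs_rat p (f k))"
proof -
  have "Cauchy (\<lambda>k. padic_abs_rat p (f k))"
    unfolding Cauchy_iff
  proof (intro allI impI)
    fix e :: real
    assume "e > 0"
    with assms obtain N where "\<forall>m\<ge>N. \<forall>k\<ge>N. padic_abs_rat p (f m - f k) < e"
      unfolding padic_cauchy_def by blast
    then show "\<exists>M. \<forall>m\<ge>M. \<forall>n\<ge>M. norm (padic_abs_rat p (f m) - padic_abs_rat p (f n)) < e"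
      using abs_padic_abs_rat_diff_le by (metis order.strict_trans1 real_norm_def)
  qed
  then show ?thesis by (simp add: Cauchy_convergent_iff)
qed

lemma padic_equiv_abs_tendsto:
  assumes "padic_cauchy p f" "padic_equiv p f g"
  shows "(\<lambda>k. padic_abs_rat p (g k)) \<longlonglongrightarrow> lim (\<lambda>k. padic_abs_rat p (f k))"
proof -
  have "(\<lambda>k. padic_abs_rat p (f k)) \<longlonglongrightarrow> lim (\<lambda>k. padic_abs_rat p (f k))"
    using padic_cauchy_abs_convergent[OF assms(1)] by (simp add: convergent_LIMSEQ_iff)
  moreover have "(\<lambda>k. padic_abs_rat p (f k) - padic_abs_rat p (g k)) \<longlonglongrightarrow> 0"
    using assms(2) unfolding padic_equiv_def
    by (rule Lim_null_comparison[rotated]) (use abs_padic_abs_rat_diff_le in auto)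
  ultimately show ?thesis
    using tendsto_diff by force
qed

lemma qp_rep_in_class:
  assumes "padic_cauchy p f"
  shows "padic_cauchy p (qp_rep (qp_class p f))" "padic_equiv p f (qp_rep (qp_class p f))"
proof -
  have "f \<in> qp_class p f" using assms by (simp add: qp_class_def padic_equiv_def)
  then have "qp_rep (qp_class p f) \<in> qp_class p f"
    unfolding qp_rep_def by (rule someI[of "\<lambda>g. g \<in> qp_class p f"])
  then show "padic_cauchy p (qp_rep (qp_class p f))" "padic_equiv p f (qp_rep (qp_class p f))"
    by (simp_all add: qp_class_def)
qed

lemma padic_cauchy_qp_rep: "x \<in> Qp p \<Longrightarrow> padic_cauchy p (qp_rep x)"
  using qp_rep_in_class(1) by (auto simp: Qp_def)

lemma qp_abs_tendsto: "x \<in> Qp p \<Longrightarrow> (\<lambda>k. padic_abs_rat p (qp_rep x k)) \<longlonglongrightarrow> qp_abs p x"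
  using padic_cauchy_abs_convergent[OF padic_cauchy_qp_rep]
  by (simp add: qp_abs_def convergent_LIMSEQ_iff)

lemma qp_abs_sub_tendsto:
  assumes "x \<in> Qp p" "y \<in> Qp p"
  shows "(\<lambda>k. padic_abs_rat p (qp_rep x k - qp_rep y k)) \<longlonglongrightarrow> qp_abs p (qp_sub p x y)"
proof -
  define D where "D = (\<lambda>k. qp_rep x k - qp_rep y k)"
  have "padic_cauchy p D"
    unfolding D_def using assms by (intro padic_cauchy_diff padic_cauchy_qp_rep)
  then have "padic_cauchy p (qp_rep (qp_class p D))" "padic_equiv p (qp_rep (qp_class p D)) D"
    using qp_rep_in_class padic_abs_rat_minus_commute by (auto simp: padic_equiv_def)
  from padic_equiv_abs_tendsto[OF this] show ?thesis
    by (simp add: qp_abs_def qp_sub_def D_def)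
qed

lemma qp_abs_nonneg: "x \<in> Qp p \<Longrightarrow> qp_abs p x \<ge> 0"
  by (rule LIMSEQ_le_const[OF qp_abs_tendsto]) (auto simp: padic_abs_rat_nonneg)

lemma qp_abs_sub_nonneg: "x \<in> Qp p \<Longrightarrow> y \<in> Qp p \<Longrightarrow> qp_abs p (qp_sub p x y) \<ge> 0"
  by (rule LIMSEQ_le_const[OF qp_abs_sub_tendsto]) (auto simp: padic_abs_rat_nonneg)

lemma qp_abs_sub_self: "x \<in> Qp p \<Longrightarrow> qp_abs p (qp_sub p x x) = 0"
  using qp_abs_sub_tendsto[of x x] by (simp add: LIMSEQ_unique)

lemma qp_abs_sub_commute:
  "x \<in> Qp p \<Longrightarrow> y \<in> Qp p \<Longrightarrow> qp_abs p (qp_sub p x y) = qp_abs p (qp_sub p y x)"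
  using qp_abs_sub_tendsto[of x y] qp_abs_sub_tendsto[of y x] padic_abs_rat_minus_commute
  by (metis (no_types, lifting) LIMSEQ_unique ext)

lemma tendsto_le_max:
  fixes a b c :: "nat \<Rightarrow> real"
  assumes "a \<longlonglongrightarrow> A" "b \<longlonglongrightarrow> B" "c \<longlonglongrightarrow> C" "\<And>k. a k \<le> max (b k) (c k)"
  shows "A \<le> max B C"
  using assms(1) tendsto_max[OF assms(2,3)] by (rule LIMSEQ_le) (use assms(4) in auto)

lemma qp_abs_sub_ultra:
  "x \<in> Qp p \<Longrightarrow> y \<in> Qp p \<Longrightarrow> z \<in> Qp p \<Longrightarrow>
   qp_abs p (qp_sub p x z) \<le> max (qp_abs p (qp_sub p x y)) (qp_abs p (qp_sub p y z))"
  by (rule tendsto_le_max[OF qp_abs_sub_tendsto qp_abs_sub_tendsto qp_abs_sub_tendsto])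
    (auto intro: padic_abs_rat_diff_ultra)

lemma qp_abs_sub_le_max:
  "x \<in> Qp p \<Longrightarrow> y \<in> Qp p \<Longrightarrow> qp_abs p (qp_sub p x y) \<le> max (qp_abs p x) (qp_abs p y)"
  by (rule tendsto_le_max[OF qp_abs_sub_tendsto qp_abs_tendsto qp_abs_tendsto])
    (auto intro: padic_abs_rat_diff_le_max)

lemma qp_abs_le_max_sub:
  "x \<in> Qp p \<Longrightarrow> y \<in> Qp p \<Longrightarrow> qp_abs p x \<le> max (qp_abs p (qp_sub p x y)) (qp_abs p y)"
  by (rule tendsto_le_max[OF qp_abs_tendsto qp_abs_sub_tendsto qp_abs_tendsto])
    (auto intro: padic_abs_rat_le_max_diff)

end

lemma Max_range_le_max:
  fixes f g h :: "'n::finite \<Rightarrow> real"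
  assumes "\<And>i. f i \<le> max (g i) (h i)"
  shows "Max (range f) \<le> max (Max (range g)) (Max (range h))"
proof -
  have "f i \<le> max (Max (range g)) (Max (range h))" for i
  proof -
    have "g i \<le> Max (range g)" "h i \<le> Max (range h)" by (auto intro: Max_ge)
    then show ?thesis using assms[of i] by linarith
  qed
  then show ?thesis by (subst Max_le_iff) auto
qed

context
  fixes p :: nat
  assumes prime: "prime p"
begin

lemma qpn_norm_nonneg:
  assumes "(x :: 'n::finite \<Rightarrow> qp) \<in> Qpn p"
  shows "qpn_norm p x \<ge> 0"
proof -
  have "0 \<le> qp_abs p (x i)" for i using qp_abs_nonneg[OF prime] assms by (simp add: Qpn_def)
  moreover have "qp_abs p (x i) \<le> qpn_norm p x" for i unfolding qpn_norm_def by (rule Max_ge) auto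
  ultimately show ?thesis using order.trans by blast
qed

lemma qpn_norm_sub_nonneg:
  assumes "(x :: 'n::finite \<Rightarrow> qp) \<in> Qpn p" "y \<in> Qpn p"
  shows "qpn_norm p (qpn_sub p x y) \<ge> 0"
proof -
  have "0 \<le> qp_abs p (qp_sub p (x i) (y i))" for i
    using qp_abs_sub_nonneg[OF prime] assms by (simp add: Qpn_def)
  moreover have "qp_abs p (qp_sub p (x i) (y i)) \<le> qpn_norm p (qpn_sub p x y)" for i
    unfolding qpn_norm_def qpn_sub_def by (rule Max_ge) auto
  ultimately show ?thesis using order.trans by blast
qed

lemma qpn_norm_sub_self: "(x :: 'n::finite \<Rightarrow> qp) \<in> Qpn p \<Longrightarrow> qpn_norm p (qpn_sub p x x) = 0"
  unfolding qpn_norm_def Qpn_def qpn_sub_def using qp_abs_sub_self[OF prime] by simp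

lemma qpn_norm_sub_commute:
  "(x :: 'n::finite \<Rightarrow> qp) \<in> Qpn p \<Longrightarrow> y \<in> Qpn p \<Longrightarrow>
   qpn_norm p (qpn_sub p x y) = qpn_norm p (qpn_sub p y x)"
  unfolding qpn_norm_def Qpn_def qpn_sub_def using qp_abs_sub_commute[OF prime] by simp

lemma qpn_norm_sub_ultra:
  "(x :: 'n::finite \<Rightarrow> qp) \<in> Qpn p \<Longrightarrow> y \<in> Qpn p \<Longrightarrow> z \<in> Qpn p \<Longrightarrow>
   qpn_norm p (qpn_sub p x z) \<le> max (qpn_norm p (qpn_sub p x y)) (qpn_norm p (qpn_sub p y z))"
  unfolding qpn_norm_def Qpn_def qpn_sub_def
  by (rule Max_range_le_max) (use qp_abs_sub_ultra[OF prime] in auto)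

lemma qpn_norm_sub_le_max:
  "(x :: 'n::finite \<Rightarrow> qp) \<in> Qpn p \<Longrightarrow> y \<in> Qpn p \<Longrightarrow>
   qpn_norm p (qpn_sub p x y) \<le> max (qpn_norm p x) (qpn_norm p y)"
  unfolding qpn_norm_def Qpn_def qpn_sub_def
  by (rule Max_range_le_max) (use qp_abs_sub_le_max[OF prime] in auto)

lemma qpn_norm_le_max_sub:
  "(x :: 'n::finite \<Rightarrow> qp) \<in> Qpn p \<Longrightarrow> y \<in> Qpn p \<Longrightarrow>
   qpn_norm p x \<le> max (qpn_norm p (qpn_sub p x y)) (qpn_norm p y)"
  unfolding qpn_norm_def Qpn_def qpn_sub_def
  by (rule Max_range_le_max) (use qp_abs_le_max_sub[OF prime] in auto)

lemma abs_qpn_norm_diff_le: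
  assumes "(x :: 'n::finite \<Rightarrow> qp) \<in> Qpn p" "y \<in> Qpn p"
  shows "\<bar>qpn_norm p y - qpn_norm p x\<bar> \<le> qpn_norm p (qpn_sub p y x)"
  using qpn_norm_le_max_sub[OF assms(2,1)] qpn_norm_le_max_sub[OF assms]
  by (intro abs_diff_le_of_le_max)
    (simp_all add: qpn_norm_sub_commute[OF assms] qpn_norm_nonneg qpn_norm_sub_nonneg assms)

end

section \<open>Nonnegative Hermitian forms\<close>

lemma mult_cnj_nonneg: "0 \<le> z * cnj (z :: complex)"
  by (simp add: complex_mult_cnj less_eq_complex_def)

lemma double_sum_mult_cnj:
  "(\<Sum>i\<in>I. \<Sum>j\<in>I. \<mu> i * cnj (\<mu> j)) = (\<Sum>i\<in>I. \<mu> i) * cnj (\<Sum>j\<in>I. \<mu> j :: complex)"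
  by (simp add: sum_product cnj_sum)

lemma same_label_kernel_nonneg:
  fixes \<mu> :: "'i \<Rightarrow> complex" and c :: "'i \<Rightarrow> 'k"
  assumes "finite I"
  shows "0 \<le> (\<Sum>i\<in>I. \<Sum>j\<in>I. of_bool (c i = c j) * \<mu> i * cnj (\<mu> j))"
proof -
  let ?S = "\<lambda>k. \<Sum>j\<in>{j \<in> I. c j = k}. \<mu> j"
  have "(\<Sum>i\<in>I. \<Sum>j\<in>I. of_bool (c i = c j) * \<mu> i * cnj (\<mu> j)) = (\<Sum>i\<in>I. \<mu> i * cnj (?S (c i)))"
    using assms by (simp add: sum.inter_filter cnj_sum sum_distrib_left eq_commute of_bool_def
        if_distrib if_distribR cong: if_cong)
  also have "\<dots> = (\<Sum>k\<in>c ` I. \<Sum>i\<in>{i \<in> I. c i = k}. \<mu> i * cnj (?S k))"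
    by (subst sum.image_gen[OF assms, where g = c]) (intro sum.cong refl, auto)
  also have "\<dots> = (\<Sum>k\<in>c ` I. ?S k * cnj (?S k))"
    by (simp add: sum_distrib_right)
  also have "0 \<le> \<dots>"
    by (intro sum_nonneg mult_cnj_nonneg)
  finally show ?thesis .
qed

lemma equiv_kernel_nonneg:
  fixes \<mu> :: "'i \<Rightarrow> complex"
  assumes "finite I" "equiv I R"
  shows "0 \<le> (\<Sum>i\<in>I. \<Sum>j\<in>I. of_bool ((i, j) \<in> R) * \<mu> i * cnj (\<mu> j))"
proof -
  have "(\<Sum>i\<in>I. \<Sum>j\<in>I. of_bool ((i, j) \<in> R) * \<mu> i * cnj (\<mu> j))
      = (\<Sum>i\<in>I. \<Sum>j\<in>I. of_bool (R `` {i} = R `` {j}) * \<mu> i * cnj (\<mu> j))"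
    using equiv_class_eq_iff[OF assms(2)] by (intro sum.cong refl) auto
  with same_label_kernel_nonneg[OF assms(1)] show ?thesis by simp
qed

section \<open>Radial functions of an ultrametric\<close>

lemma mono_on_finite_threshold_sum:
  fixes h :: "real \<Rightarrow> real"
  assumes "finite T" "T \<noteq> {}" "mono_on T h"
  obtains N :: nat and r c where "\<forall>k<N. r k \<in> T" "\<forall>k<N. 0 \<le> c k"
    "\<forall>s\<in>T. h s = h (Min T) + (\<Sum>k<N. c k * of_bool (r k < s))"
proof -
  define ts where "ts = sorted_list_of_set T"
  define N where "N = card T - 1"
  have len: "length ts = Suc N"
    using assms by (simp add: ts_def N_def card_gt_0_iff)
  have set_ts: "set ts = T" using assms by (simp add: ts_def)
  have strict: "sorted_wrt (<) ts"
    using strict_sorted_list_of_set[of T] by (simp add: ts_def)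
  have ts_in: "ts ! k \<in> T" if "k \<le> N" for k
    using that len set_ts nth_mem[of k ts] by simp
  have ts_less_iff: "ts ! k < ts ! K \<longleftrightarrow> k < K" if "k \<le> N" "K \<le> N" for k K
    using that len strict sorted_wrt_nth_less[OF strict]
      sorted_nth_mono[OF strict_sorted_imp_sorted[OF strict]]
    by (metis le_imp_less_Suc not_less)
  have ts_0: "ts ! 0 = Min T"
    using sorted_list_of_set_nonempty[OF assms(1,2)] by (simp add: ts_def)
  have decomposition: "h s = h (Min T) + (\<Sum>k<N. (h (ts ! Suc k) - h (ts ! k)) * of_bool (ts ! k < s))"
    if "s \<in> T" for s
  proof -
    obtain K where K: "K \<le> N" "s = ts ! K"
      using \<open>s \<in> T\<close> len set_ts by (metis in_set_conv_nth less_Suc_eq_le)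
    have "(\<Sum>k<N. (h (ts ! Suc k) - h (ts ! k)) * of_bool (ts ! k < s))
        = (\<Sum>k<N. if k \<in> {..<K} then h (ts ! Suc k) - h (ts ! k) else 0)"
      by (intro sum.cong refl) (use K ts_less_iff in auto)
    also have "\<dots> = (\<Sum>k<K. h (ts ! Suc k) - h (ts ! k))"
      using K by (subst sum.inter_restrict[symmetric]) (simp_all add: Int_absorb1)
    also have "\<dots> = h s - h (Min T)"
      using sum_lessThan_telescope[of "\<lambda>k. h (ts ! k)" K] by (simp add: K ts_0)
    finally show ?thesis by simp
  qed
  have jumps_nonneg: "0 \<le> h (ts ! Suc k) - h (ts ! k)" if "k < N" for k
  proof -
    have "ts ! k \<le> ts ! Suc k" using that ts_less_iff[of k "Suc k"] by simp
    with that show ?thesis using mono_onD[OF assms(3)] ts_in by simp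
  qed
  show ?thesis
  proof (rule that[of N "\<lambda>k. ts ! k" "\<lambda>k. h (ts ! Suc k) - h (ts ! k)"])
    show "\<forall>k<N. ts ! k \<in> T" using ts_in by simp
    show "\<forall>k<N. 0 \<le> h (ts ! Suc k) - h (ts ! k)" using jumps_nonneg by blast
    show "\<forall>s\<in>T. h s = h (Min T) + (\<Sum>k<N. (h (ts ! Suc k) - h (ts ! k)) * of_bool (ts ! k < s))"
      using decomposition by blast
  qed
qed

text \<open>The configuration of finitely many points \<open>x\<^sub>i\<close> of an ultrametric space with a base
  point \<open>0\<close>, through \<open>a i = d(x\<^sub>i, 0)\<close> and \<open>d i j = d(x\<^sub>i, x\<^sub>j)\<close>.\<close>
locale ultrametric_family =
  fixes I :: "'i set" and a :: "'i \<Rightarrow> real" and d :: "'i \<Rightarrow> 'i \<Rightarrow> real"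
  assumes finite_index: "finite I"
    and a_nonneg: "i \<in> I \<Longrightarrow> 0 \<le> a i"
    and d_self: "i \<in> I \<Longrightarrow> d i i = 0"
    and d_commute: "i \<in> I \<Longrightarrow> j \<in> I \<Longrightarrow> d i j = d j i"
    and d_ultra: "i \<in> I \<Longrightarrow> j \<in> I \<Longrightarrow> k \<in> I \<Longrightarrow> d i k \<le> max (d i j) (d j k)"
    and d_le_max: "i \<in> I \<Longrightarrow> j \<in> I \<Longrightarrow> d i j \<le> max (a i) (a j)"
    and a_le_max: "i \<in> I \<Longrightarrow> j \<in> I \<Longrightarrow> a i \<le> max (d i j) (a j)"
begin

lemma d_nonneg: "i \<in> I \<Longrightarrow> j \<in> I \<Longrightarrow> 0 \<le> d i j"
  using d_ultra[of i j i] d_self d_commute by simp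

definition radial_form :: "(real \<Rightarrow> real) \<Rightarrow> ('i \<Rightarrow> complex) \<Rightarrow> complex" where
  "radial_form h l = (\<Sum>i\<in>I. \<Sum>j\<in>I. complex_of_real (h (a i) + h (a j) - h (d i j)) * l i * cnj (l j))"

lemma radial_form_cong:
  assumes "\<And>i. i \<in> I \<Longrightarrow> h (a i) = h' (a i)" "\<And>i j. i \<in> I \<Longrightarrow> j \<in> I \<Longrightarrow> h (d i j) = h' (d i j)"
  shows "radial_form h l = radial_form h' l"
  unfolding radial_form_def using assms by (intro sum.cong refl) simp

lemma radial_form_threshold_nonneg:
  assumes "0 \<le> r"
  shows "0 \<le> radial_form (\<lambda>t. of_bool (r < t)) l"
proof -
  define \<mu> where "\<mu> i = of_bool (r < a i) * l i" for i
  define R where "R = {(i, j) \<in> I \<times> I. d i j \<le> r}"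
  have "equiv I R"
  proof (rule equivI)
    show "refl_on I R" using d_self assms by (auto simp: R_def refl_on_def)
    show "sym R" using d_commute by (auto simp: R_def sym_def)
    show "trans R"
    proof (rule transI)
      fix i j k assume "(i, j) \<in> R" "(j, k) \<in> R"
      then show "(i, k) \<in> R" using d_ultra[of i j k] by (auto simp: R_def)
    qed
  qed (auto simp: R_def)
  have coefficient:
    "complex_of_real (of_bool (r < a i) + of_bool (r < a j) - of_bool (r < d i j)) * l i * cnj (l j)
      = \<mu> i * cnj (\<mu> j) + of_bool ((i, j) \<in> R) * \<mu> i * cnj (\<mu> j)" if "i \<in> I" "j \<in> I" for i j
    using d_le_max[OF that] a_le_max[OF that] a_le_max[OF that(2,1)] d_commute[OF that]
    by (cases "r < a i"; cases "r < a j") (auto simp: \<mu>_def R_def that algebra_simps)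
  have "radial_form (\<lambda>t. of_bool (r < t)) l
      = (\<Sum>i\<in>I. \<Sum>j\<in>I. \<mu> i * cnj (\<mu> j) + of_bool ((i, j) \<in> R) * \<mu> i * cnj (\<mu> j))"
    unfolding radial_form_def by (intro sum.cong refl) (rule coefficient)
  also have "\<dots> = (\<Sum>i\<in>I. \<Sum>j\<in>I. \<mu> i * cnj (\<mu> j))
      + (\<Sum>i\<in>I. \<Sum>j\<in>I. of_bool ((i, j) \<in> R) * \<mu> i * cnj (\<mu> j))"
    by (simp add: sum.distrib)
  also have "0 \<le> \<dots>"
    unfolding double_sum_mult_cnj
    by (intro add_nonneg_nonneg mult_cnj_nonneg equiv_kernel_nonneg finite_index \<open>equiv I R\<close>)
  finally show ?thesis .
qed

lemma radial_form_const:
  "radial_form (\<lambda>_. c) l = complex_of_real c * ((\<Sum>i\<in>I. l i) * cnj (\<Sum>j\<in>I. l j))"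
  unfolding radial_form_def double_sum_mult_cnj[symmetric]
  by (simp add: sum_distrib_left mult.assoc)

lemma radial_form_add: "radial_form (\<lambda>t. f t + g t) l = radial_form f l + radial_form g l"
  unfolding radial_form_def by (simp add: sum.distrib algebra_simps flip: sum.distrib)

lemma radial_form_scale: "radial_form (\<lambda>t. c * f t) l = complex_of_real c * radial_form f l"
  unfolding radial_form_def by (simp add: sum_distrib_left algebra_simps)

lemma radial_form_sum:
  fixes N :: nat
  shows "radial_form (\<lambda>t. \<Sum>k<N. f k t) l = (\<Sum>k<N. radial_form (f k) l)"
proof (induction N)
  case 0
  show ?case using radial_form_const[of 0] by simp
next
  case (Suc N)
  then show ?case by (simp add: radial_form_add)
qed

lemma radial_form_nonneg:
  assumes "mono_on {0..} h" "0 \<le> h 0"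
  shows "0 \<le> radial_form h l"
proof (cases "I = {}")
  case True
  show ?thesis unfolding radial_form_def using True by simp
next
  case False
  define T where "T = a ` I \<union> (\<lambda>(i, j). d i j) ` (I \<times> I)"
  have T: "finite T" "T \<noteq> {}" "T \<subseteq> {0..}"
    using finite_index False a_nonneg d_nonneg by (auto simp: T_def)
  then have "mono_on T h" using assms(1) mono_on_subset by blast
  then obtain N :: nat and r c where r: "\<forall>k<N. r k \<in> T" and c: "\<forall>k<N. 0 \<le> c k"
    and h_eq: "\<forall>s\<in>T. h s = h (Min T) + (\<Sum>k<N. c k * of_bool (r k < s))"
    by (rule mono_on_finite_threshold_sum[OF T(1,2)])
  have "radial_form h l = radial_form (\<lambda>t. h (Min T) + (\<Sum>k<N. c k * of_bool (r k < t))) l"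
    using h_eq by (intro radial_form_cong) (force simp: T_def)+
  also have "\<dots> = complex_of_real (h (Min T)) * ((\<Sum>i\<in>I. l i) * cnj (\<Sum>j\<in>I. l j))
      + (\<Sum>k<N. complex_of_real (c k) * radial_form (\<lambda>t. of_bool (r k < t)) l)"
    by (simp only: radial_form_add radial_form_const radial_form_sum radial_form_scale)
  also have "0 \<le> \<dots>"
  proof (intro add_nonneg_nonneg sum_nonneg mult_cnj_nonneg mult_nonneg_nonneg)
    have "Min T \<in> {0..}" using T Min_in by blast
    then show "0 \<le> complex_of_real (h (Min T))"
      using assms mono_onD[OF assms(1), of 0 "Min T"] by (simp add: less_eq_complex_def)
    show "0 \<le> complex_of_real (c k)" if "k \<in> {..<N}" for k
      using c that by (simp add: less_eq_complex_def)
    show "0 \<le> radial_form (\<lambda>t. of_bool (r k < t)) l" if "k \<in> {..<N}" for k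
      using r T that by (intro radial_form_threshold_nonneg) auto
  qed
  finally show ?thesis .
qed

end

lemma ultrametric_family_qpn:
  fixes x :: "nat \<Rightarrow> 'n::finite \<Rightarrow> qp"
  assumes "prime p" "\<forall>i<m. x i \<in> Qpn p"
  shows "ultrametric_family {..<m} (\<lambda>i. qpn_norm p (x i)) (\<lambda>i j. qpn_norm p (qpn_sub p (x i) (x j)))"
  using assms
  by unfold_locales
    (auto simp: qpn_norm_nonneg qpn_norm_sub_self qpn_norm_sub_commute qpn_norm_sub_ultra
      qpn_norm_sub_le_max qpn_norm_le_max_sub)

lemma negdef_radial:
  assumes "prime p" "mono_on {0..} h" "0 \<le> h 0"
  shows "negdef p (\<lambda>\<xi> :: 'n::finite \<Rightarrow> qp. complex_of_real (h (qpn_norm p \<xi>)))"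
  unfolding negdef_def
proof (intro allI impI)
  fix m :: nat and x :: "nat \<Rightarrow> 'n \<Rightarrow> qp" and l :: "nat \<Rightarrow> complex"
  assume "\<forall>i<m. x i \<in> Qpn p"
  then interpret ultrametric_family "{..<m}" "\<lambda>i. qpn_norm p (x i)"
      "\<lambda>i j. qpn_norm p (qpn_sub p (x i) (x j))"
    by (rule ultrametric_family_qpn[OF assms(1)])
  show "0 \<le> (\<Sum>i<m. \<Sum>j<m. (complex_of_real (h (qpn_norm p (x i)))
      + cnj (complex_of_real (h (qpn_norm p (x j))))
      - complex_of_real (h (qpn_norm p (qpn_sub p (x i) (x j))))) * l i * cnj (l j))"
    using radial_form_nonneg[OF assms(2,3), of l] by (simp add: radial_form_def)
qed

lemma qpn_continuous_radial:
  assumes "prime p" "continuous_on {0..} h"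
  shows "qpn_continuous p (\<lambda>\<xi> :: 'n::finite \<Rightarrow> qp. complex_of_real (h (qpn_norm p \<xi>)))"
  unfolding qpn_continuous_def
proof (intro ballI allI impI)
  fix x :: "'n \<Rightarrow> qp" and e :: real
  assume x: "x \<in> Qpn p" and "e > 0"
  then obtain \<delta> where "\<delta> > 0"
    and \<delta>: "\<forall>t\<in>{0..}. dist t (qpn_norm p x) < \<delta> \<longrightarrow> dist (h t) (h (qpn_norm p x)) < e"
    using assms(2) qpn_norm_nonneg[OF assms(1) x] unfolding continuous_on_iff by fastforce
  have "cmod (complex_of_real (h (qpn_norm p y)) - complex_of_real (h (qpn_norm p x))) < e"
    if "y \<in> Qpn p" "qpn_norm p (qpn_sub p y x) < \<delta>" for y
  proof -
    have "dist (qpn_norm p y) (qpn_norm p x) < \<delta>"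
      using abs_qpn_norm_diff_le[OF assms(1) x that(1)] that(2) by (simp add: dist_real_def)
    then have "dist (h (qpn_norm p y)) (h (qpn_norm p x)) < e"
      using \<delta> qpn_norm_nonneg[OF assms(1) that(1)] by simp
    then show ?thesis by (simp add: dist_real_def flip: of_real_diff)
  qed
  with \<open>\<delta> > 0\<close> show "\<exists>\<delta>>0. \<forall>y\<in>Qpn p. qpn_norm p (qpn_sub p y x) < \<delta> \<longrightarrow>
      cmod (complex_of_real (h (qpn_norm p y)) - complex_of_real (h (qpn_norm p x))) < e"
    by blast
qed

section \<open>Exponentials of negative definite functions\<close>

lemma mono_on_nonneg_power_series:
  fixes c :: "nat \<Rightarrow> real" and \<alpha> :: "nat \<Rightarrow> nat"
  assumes "\<And>j. 0 \<le> c j" "\<And>y. 0 \<le> y \<Longrightarrow> summable (\<lambda>j. c j * y ^ \<alpha> j)"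
  shows "mono_on {0..} (\<lambda>y. \<Sum>j. c j * y ^ \<alpha> j)"
proof (rule mono_onI)
  fix s t :: real
  assume "s \<in> {0..}" "t \<in> {0..}" "s \<le> t"
  then show "(\<Sum>j. c j * s ^ \<alpha> j) \<le> (\<Sum>j. c j * t ^ \<alpha> j)"
    using assms by (intro suminf_le mult_left_mono power_mono) auto
qed

text \<open>Summability for \<open>y \<ge> 0\<close> already gives uniform convergence on every ball, by comparison
  with the series at the radius.\<close>
lemma continuous_on_nonneg_power_series:
  fixes c :: "nat \<Rightarrow> real" and \<alpha> :: "nat \<Rightarrow> nat"
  assumes "\<And>j. 0 \<le> c j" "\<And>y. 0 \<le> y \<Longrightarrow> summable (\<lambda>j. c j * y ^ \<alpha> j)"
  shows "continuous_on UNIV (\<lambda>y. \<Sum>j. c j * y ^ \<alpha> j)"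
proof -
  have "continuous_on (ball 0 R) (\<lambda>y. \<Sum>j. c j * y ^ \<alpha> j)" if "R \<ge> 0" for R
  proof (rule uniform_limit_theorem)
    show "uniform_limit (ball 0 R) (\<lambda>n y. \<Sum>j<n. c j * y ^ \<alpha> j) (\<lambda>y. \<Sum>j. c j * y ^ \<alpha> j) sequentially"
    proof (rule Weierstrass_m_test)
      fix j and y :: real
      assume "y \<in> ball 0 R"
      then show "norm (c j * y ^ \<alpha> j) \<le> c j * R ^ \<alpha> j"
        using assms(1)[of j] by (auto simp: abs_mult power_abs intro!: mult_left_mono power_mono)
    qed (use assms(2) that in auto)
  qed (auto intro!: always_eventually continuous_intros)
  then have "isCont (\<lambda>y. \<Sum>j. c j * y ^ \<alpha> j) y" for y
    using continuous_on_eq_continuous_at[OF open_ball, of 0 "\<bar>y\<bar> + 1"] by force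
  then show ?thesis by (simp add: continuous_at_imp_continuous_on)
qed

lemma mono_funpow_exp: "mono (exp ^^ k :: real \<Rightarrow> real)"
  by (induction k) (auto simp: mono_def)

lemma funpow_exp_pos: "k \<ge> 1 \<Longrightarrow> (exp ^^ k) (s :: real) > 0"
  by (cases k) auto

lemma continuous_on_funpow_exp: "continuous_on A (exp ^^ k :: real \<Rightarrow> real)"
  by (induction k) (auto intro: continuous_on_compose2[OF continuous_on_exp[OF continuous_on_id]])

lemma sums_nonneg_complex:
  fixes f :: "nat \<Rightarrow> complex"
  assumes "f sums s" "\<And>n. 0 \<le> f n"
  shows "0 \<le> s"
proof -
  have re: "(\<lambda>n. Re (f n)) sums Re s" and im: "(\<lambda>n. Im (f n)) sums Im s"
    using assms(1) by (auto intro: bounded_linear.sums bounded_linear_Re bounded_linear_Im)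
  have "Im (f n) = 0" "0 \<le> Re (f n)" for n
    using assms(2)[of n] by (auto simp: less_eq_complex_def)
  then have "Im s = 0" "0 \<le> Re s"
    using sums_unique[OF im] sums_le[of "\<lambda>_. 0" "\<lambda>n. Re (f n)"] re by auto
  then show ?thesis by (simp add: less_eq_complex_def)
qed

lemma negdef_exp_of_negdef_powers:
  fixes \<psi> :: "('n::finite \<Rightarrow> qp) \<Rightarrow> complex"
  assumes "\<forall>j::nat. negdef p (\<lambda>\<xi>. \<psi> \<xi> ^ j)"
  shows "negdef p (\<lambda>\<xi>. exp (\<psi> \<xi>))"
  unfolding negdef_def
proof (intro allI impI)
  fix m :: nat and x :: "nat \<Rightarrow> 'n \<Rightarrow> qp" and l :: "nat \<Rightarrow> complex"
  assume "1 \<le> m" "\<forall>i<m. x i \<in> Qpn p"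
  define Q where "Q j = (\<Sum>i<m. \<Sum>k<m. (\<psi> (x i) ^ j + cnj (\<psi> (x k) ^ j)
      - \<psi> (qpn_sub p (x i) (x k)) ^ j) * l i * cnj (l k))" for j
  have "0 \<le> Q j" for j
    using assms \<open>1 \<le> m\<close> \<open>\<forall>i<m. x i \<in> Qpn p\<close> unfolding negdef_def Q_def by blast
  then have "0 \<le> Q j /\<^sub>R fact j" for j
    by (simp add: less_eq_complex_def)
  moreover have "(\<lambda>j. Q j /\<^sub>R fact j) sums (\<Sum>i<m. \<Sum>k<m. (exp (\<psi> (x i)) + cnj (exp (\<psi> (x k)))
      - exp (\<psi> (qpn_sub p (x i) (x k)))) * l i * cnj (l k))"
  proof -
    have "Q j /\<^sub>R fact j = (\<Sum>i<m. \<Sum>k<m. (\<psi> (x i) ^ j /\<^sub>R fact j + cnj (\<psi> (x k) ^ j /\<^sub>R fact j)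
        - \<psi> (qpn_sub p (x i) (x k)) ^ j /\<^sub>R fact j) * l i * cnj (l k))" for j
      unfolding Q_def scaleR_sum_right
      by (intro sum.cong refl) (simp add: scaleR_conv_of_real algebra_simps)
    then show ?thesis
      by (simp only:) (intro sums_sum sums_mult2 sums_add sums_diff exp_converges iffD2[OF sums_cnj])
  qed
  ultimately show "0 \<le> (\<Sum>i<m. \<Sum>k<m. (exp (\<psi> (x i)) + cnj (exp (\<psi> (x k)))
      - exp (\<psi> (qpn_sub p (x i) (x k)))) * l i * cnj (l k))"
    by (rule sums_nonneg_complex[rotated])
qed

lemma iterated_exp_power_series_radial:
  fixes c :: "nat \<Rightarrow> real" and \<alpha> :: "nat \<Rightarrow> nat"
  assumes "prime p" "\<And>j. 0 \<le> c j" "\<And>y. 0 \<le> y \<Longrightarrow> summable (\<lambda>j. c j * y ^ \<alpha> j)" "1 \<le> k"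
  defines "g \<equiv> \<lambda>y. (exp ^^ k) (\<Sum>j. c j * y ^ \<alpha> j)"
  shows "qpn_continuous p (\<lambda>\<xi> :: 'n::finite \<Rightarrow> qp. complex_of_real (g (qpn_norm p \<xi>)))"
    and "negdef p (\<lambda>\<xi> :: 'n::finite \<Rightarrow> qp. complex_of_real (g (qpn_norm p \<xi>)))"
proof -
  have "mono_on {0..} g"
    using mono_on_nonneg_power_series[OF assms(2,3)] mono_funpow_exp
    by (auto simp: g_def mono_on_def mono_def)
  moreover have "continuous_on {0..} g"
    unfolding g_def
    by (rule continuous_on_subset[OF continuous_on_compose2[OF continuous_on_funpow_exp
          continuous_on_nonneg_power_series[OF assms(2,3)]]])
      auto
  moreover have "0 \<le> g 0" using funpow_exp_pos[OF assms(4)] by (simp add: g_def less_imp_le)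
  ultimately show "qpn_continuous p (\<lambda>\<xi> :: 'n \<Rightarrow> qp. complex_of_real (g (qpn_norm p \<xi>)))"
    "negdef p (\<lambda>\<xi> :: 'n \<Rightarrow> qp. complex_of_real (g (qpn_norm p \<xi>)))"
    using assms(1) by (simp_all add: qpn_continuous_radial negdef_radial)
qed

theorem lemma3p1:
  fixes p :: nat
  assumes "prime p"
  shows "(\<forall>\<psi> :: ('n::finite \<Rightarrow> qp) \<Rightarrow> complex.
           negdef p \<psi> \<and> (\<forall>j::nat. negdef p (\<lambda>\<xi>. (\<psi> \<xi>) ^ j))
           \<longrightarrow> negdef p (\<lambda>\<xi>. exp (\<psi> \<xi>)))
         \<and> (\<forall>(c :: nat \<Rightarrow> real) (\<alpha> :: nat \<Rightarrow> nat).
           (\<forall>j\<ge>1. c j \<ge> 0)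
           \<and> (\<forall>y::real. y \<ge> 0 \<longrightarrow> summable (\<lambda>j. c (Suc j) * y ^ \<alpha> (Suc j)))
           \<and> (\<exists>y1 y2 :: real. y1 \<ge> 0 \<and> y2 \<ge> 0 \<and>
                (\<Sum>j. c (Suc j) * y1 ^ \<alpha> (Suc j)) \<noteq> (\<Sum>j. c (Suc j) * y2 ^ \<alpha> (Suc j)))
           \<longrightarrow> (\<forall>k::nat. k \<ge> 1 \<longrightarrow>
                 (let F = (\<lambda>\<xi> :: 'n \<Rightarrow> qp. complex_of_real
                             ((exp ^^ k) (\<Sum>j. c (Suc j) * qpn_norm p \<xi> ^ \<alpha> (Suc j))))
                  in qpn_continuous p F \<and> negdef p F)))"
proof (intro conjI allI impI)
  fix \<psi> :: "('n \<Rightarrow> qp) \<Rightarrow> complex"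
  assume "negdef p \<psi> \<and> (\<forall>j::nat. negdef p (\<lambda>\<xi>. \<psi> \<xi> ^ j))"
  then show "negdef p (\<lambda>\<xi>. exp (\<psi> \<xi>))" by (intro negdef_exp_of_negdef_powers) blast
next
  fix c :: "nat \<Rightarrow> real" and \<alpha> :: "nat \<Rightarrow> nat" and k :: nat
  assume "(\<forall>j\<ge>1. c j \<ge> 0) \<and> (\<forall>y::real. y \<ge> 0 \<longrightarrow> summable (\<lambda>j. c (Suc j) * y ^ \<alpha> (Suc j)))
      \<and> (\<exists>y1 y2 :: real. y1 \<ge> 0 \<and> y2 \<ge> 0 \<and>
           (\<Sum>j. c (Suc j) * y1 ^ \<alpha> (Suc j)) \<noteq> (\<Sum>j. c (Suc j) * y2 ^ \<alpha> (Suc j)))"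
    and "k \<ge> 1"
  then show "let F = (\<lambda>\<xi> :: 'n \<Rightarrow> qp. complex_of_real
      ((exp ^^ k) (\<Sum>j. c (Suc j) * qpn_norm p \<xi> ^ \<alpha> (Suc j)))) in qpn_continuous p F \<and> negdef p F"
    using iterated_exp_power_series_radial[OF assms, of "\<lambda>j. c (Suc j)" "\<lambda>j. \<alpha> (Suc j)" k]
    by (simp add: Let_def)
qed

end
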